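(* Let $n\ge 3$ and define $$m=\begin{cases} n-2, & n\equiv 1,3\pmod 6,\ n\ne 7;\\ n-1, & n=7 \text{ or } n\equiv 0,2,5\pmod 6,\ n\ne 6;\\ n, & n=6 \text{ or } n\equiv 4\pmod 6.\end{cases}$$ If $g\ge m$ is a positive integer and there exists an orthogonal array $\mathrm{OA}(3,n+2,g)$, then there exists a $\mathrm{TOC}_{g+1}(n,4,3)$.
   Context: $\mathcal{H}_q(n,w)$ is the set of all words of length $n$ over $\mathbb{Z}_q$ with exactly $w$ nonzero entries, with the Hamming distance. An $(n,d,w)_q$-code is a nonempty subset of $\mathcal{H}_q(n,w)$ in which any two distinct words have Hamming distance at least $d$; $A_q(n,d,w)$ is the maximum size of such a code and a code of this size is optimal. A $\mathrm{TOC}_q(n,d,w)$ is a partition of $\mathcal{H}_q(n,w)$ into mutually disjoint optimal $(n,d,w)_q$-codes. An orthogonal array $\mathrm{OA}(t,k,s)$ is an $s^t\times k$ array over an $s$-symbol alphabet such that in every choice of $t$ columns each ordered $t$-tuple of symbols appears in exactly one row. *)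

theory Defs
  imports Main
begin

definition hamming_dist :: "nat list \<Rightarrow> nat list \<Rightarrow> nat" where
  "hamming_dist x y = card {i. i < length x \<and> x ! i \<noteq> y ! i}"

definition weight :: "nat list \<Rightarrow> nat" where
  "weight x = card {i. i < length x \<and> x ! i \<noteq> 0}"

definition Hq :: "nat \<Rightarrow> nat \<Rightarrow> nat \<Rightarrow> nat list set" where
  "Hq q n w = {x. length x = n \<and> set x \<subseteq> {..<q} \<and> weight x = w}"

definition is_code :: "nat \<Rightarrow> nat \<Rightarrow> nat \<Rightarrow> nat \<Rightarrow> nat list set \<Rightarrow> bool" where
  "is_code q n d w C \<longleftrightarrow> C \<noteq> {} \<and> C \<subseteq> Hq q n w \<and>
     (\<forall>x\<in>C. \<forall>y\<in>C. x \<noteq> y \<longrightarrow> hamming_dist x y \<ge> d)"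

definition Aq :: "nat \<Rightarrow> nat \<Rightarrow> nat \<Rightarrow> nat \<Rightarrow> nat" where
  "Aq q n d w = Max (card ` {C. is_code q n d w C})"

definition optimal_code :: "nat \<Rightarrow> nat \<Rightarrow> nat \<Rightarrow> nat \<Rightarrow> nat list set \<Rightarrow> bool" where
  "optimal_code q n d w C \<longleftrightarrow> is_code q n d w C \<and> card C = Aq q n d w"

definition TOC :: "nat \<Rightarrow> nat \<Rightarrow> nat \<Rightarrow> nat \<Rightarrow> nat list set set \<Rightarrow> bool" where
  "TOC q n d w P \<longleftrightarrow> \<Union>P = Hq q n w \<and>
     (\<forall>C\<in>P. optimal_code q n d w C) \<and>
     (\<forall>C\<in>P. \<forall>D\<in>P. C \<noteq> D \<longrightarrow> C \<inter> D = {})"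

definition OA :: "nat \<Rightarrow> nat \<Rightarrow> nat \<Rightarrow> bool" where
  "OA t k s \<longleftrightarrow> (\<exists>A :: nat \<Rightarrow> nat \<Rightarrow> nat.
     (\<forall>r < s ^ t. \<forall>c < k. A r c < s) \<and>
     (\<forall>cs vs. distinct cs \<and> length cs = t \<and> set cs \<subseteq> {..<k} \<and>
              length vs = t \<and> set vs \<subseteq> {..<s} \<longrightarrow>
        (\<exists>!r. r < s ^ t \<and> (\<forall>j < t. A r (cs ! j) = vs ! j))))"

definition m_param :: "nat \<Rightarrow> nat" where
  "m_param n =
     (if (n mod 6 = 1 \<or> n mod 6 = 3) \<and> n \<noteq> 7 then n - 2
      else if n = 7 \<or> ((n mod 6 = 0 \<or> n mod 6 = 2 \<or> n mod 6 = 5) \<and> n \<noteq> 6) then n - 1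
      else n)"

end

theory Submission
  imports Defs "HOL-Number_Theory.Cong"
begin

text \<open>Every row \<open>a\<close> of an \<open>OA(3, n+2, g)\<close> yields a code in \<open>H\<^sub>g\<^sub>+\<^sub>1(n, 3)\<close>: the word with
  support \<open>T\<close> carries \<open>1 + ((a\<^sub>i + \<Sum>T) mod g)\<close> at each \<open>i \<in> T\<close>. Distinct supports give
  distance at least 4, except when they share two coordinates; then the coordinate sums differ
  by \<open>t - t'\<close> with \<open>t \<noteq> t' < n\<close>, so the words differ in the shared coordinates as well as
  soon as \<open>n \<le> g\<close>. That inequality is Bush's bound for the array when \<open>g \<ge> 2\<close>, and for
  \<open>g = 1\<close> the hypothesis \<open>g \<ge> m\<close> forces \<open>n = 3\<close>, where there is only one support. Each
  code has one word per support, which is optimal because words of a weight-3 code with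
  distance 4 have distinct supports. Since any three columns of the array show every triple
  of symbols exactly once, every word of \<open>H\<^sub>g\<^sub>+\<^sub>1(n, 3)\<close> lies in exactly one of the
  \<open>g\<^sup>3\<close> row codes.\<close>

definition supp :: "nat list \<Rightarrow> nat set" where
  "supp x = {i. i < length x \<and> x ! i \<noteq> 0}"

lemma weight_eq_card_supp: "weight x = card (supp x)"
  by (simp add: weight_def supp_def)

lemma supp_subset_indices: "supp x \<subseteq> {..<length x}"
  by (auto simp: supp_def)

lemma hamming_dist_le_card_supp:
  assumes "length y = length x" "supp y = supp x"
  shows "hamming_dist x y \<le> card (supp x)"
  unfolding hamming_dist_def
proof (rule card_mono)
  show "finite (supp x)" by (simp add: supp_def)
  show "{i. i < length x \<and> x ! i \<noteq> y ! i} \<subseteq> supp x"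
  proof (rule subsetI, rule ccontr)
    fix i assume i: "i \<in> {i. i < length x \<and> x ! i \<noteq> y ! i}" "i \<notin> supp x"
    then have "i \<notin> supp y"
      using assms(2) by simp
    then show False
      using i assms(1) unfolding supp_def by simp
  qed
qed

lemma card_code_le_choose:
  assumes C: "is_code q n d w C" and "w < d"
  shows "card C \<le> n choose w"
proof -
  have word: "length x = n" "weight x = w" if "x \<in> C" for x
    using C that unfolding is_code_def Hq_def by auto
  have "inj_on supp C"
  proof (rule inj_onI, rule ccontr)
    fix x y assume xy: "x \<in> C" "y \<in> C" "supp x = supp y" "x \<noteq> y"
    then have "d \<le> hamming_dist x y"
      using C unfolding is_code_def by blast
    moreover have "hamming_dist x y \<le> w"
      using hamming_dist_le_card_supp[of y x] xy word by (simp add: weight_eq_card_supp)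
    ultimately show False using \<open>w < d\<close> by simp
  qed
  moreover have "supp ` C \<subseteq> {T. T \<subseteq> {..<n} \<and> card T = w}"
    using word supp_subset_indices by (fastforce simp: weight_eq_card_supp)
  ultimately have "card C \<le> card {T. T \<subseteq> {..<n} \<and> card T = w}"
    by (intro card_inj_on_le) auto
  also have "\<dots> = n choose w"
    by (simp add: n_subsets)
  finally show ?thesis .
qed

lemma optimal_code_if_card_eq_choose:
  assumes "is_code q n d w C" "w < d" "card C = n choose w"
  shows "optimal_code q n d w C"
proof -
  have "Aq q n d w = n choose w"
    unfolding Aq_def
  proof (rule Max_eqI)
    show "finite (card ` {C. is_code q n d w C})"
      by (rule finite_subset[of _ "{..n choose w}"])
        (auto dest: card_code_le_choose[OF _ \<open>w < d\<close>])
    show "m \<le> n choose w" if "m \<in> card ` {C. is_code q n d w C}" for m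
      using that card_code_le_choose[OF _ \<open>w < d\<close>] by auto
    show "n choose w \<in> card ` {C. is_code q n d w C}"
      using assms(1,3) by force
  qed
  then show ?thesis
    using assms unfolding optimal_code_def by simp
qed

definition triples :: "nat \<Rightarrow> nat set set" where
  "triples n = {T. T \<subseteq> {..<n} \<and> card T = 3}"

lemma card_triples: "card (triples n) = n choose 3"
  unfolding triples_def by (simp add: n_subsets)

lemma triples_mono: "n \<le> k \<Longrightarrow> triples n \<subseteq> triples k"
  unfolding triples_def by auto

lemma triples_distinct_imp_ge4:
  assumes "T \<in> triples n" "T' \<in> triples n" "T \<noteq> T'"
  shows "4 \<le> n"
proof (rule ccontr)
  assume "\<not> 4 \<le> n"
  then have "card {..<n} \<le> 3"
    by simp
  then have "T = {..<n}" "T' = {..<n}"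
    using assms(1,2) card_seteq[of "{..<n}" T] card_seteq[of "{..<n}" T']
    unfolding triples_def by simp_all
  with assms(3) show False by simp
qed

lemma sum_mod_neq_if_card_Int_eq_2:
  assumes T: "T \<in> triples n" and T': "T' \<in> triples n"
    and "card (T \<inter> T') = 2" and "n \<le> g"
  shows "\<Sum>T mod g \<noteq> \<Sum>T' mod g"
proof -
  have fin: "finite T" "finite T'"
    using T T' unfolding triples_def by (auto intro: finite_subset)
  have "card (T - T') = 1" "card (T' - T) = 1"
    using T T' \<open>card (T \<inter> T') = 2\<close> fin unfolding triples_def
    by (simp_all add: card_Diff_subset_Int Int_commute)
  then obtain t t' where t: "T - T' = {t}" and t': "T' - T = {t'}"
    by (auto simp: card_Suc_eq)
  have "T = insert t (T \<inter> T')" "T' = insert t' (T \<inter> T')"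
    using t t' by blast+
  then have "\<Sum>T = t + \<Sum>(T \<inter> T')" "\<Sum>T' = t' + \<Sum>(T \<inter> T')"
    using fin t t' by (metis DiffD2 Int_iff finite_Int insertI1 sum.insert)+
  moreover have "t < g" "t' < g" "t \<noteq> t'"
    using t t' T T' \<open>n \<le> g\<close> unfolding triples_def by auto
  ultimately show ?thesis
    using cong_add_rcancel_nat[of t "\<Sum>(T \<inter> T')" t' g] by (simp add: cong_def)
qed

definition code_word :: "(nat \<Rightarrow> nat) \<Rightarrow> nat \<Rightarrow> nat \<Rightarrow> nat set \<Rightarrow> nat list" where
  "code_word a g n T = map (\<lambda>i. if i \<in> T then Suc ((a i + \<Sum>T) mod g) else 0) [0..<n]"

definition row_code :: "(nat \<Rightarrow> nat) \<Rightarrow> nat \<Rightarrow> nat \<Rightarrow> nat list set" where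
  "row_code a g n = code_word a g n ` triples n"

lemma length_code_word [simp]: "length (code_word a g n T) = n"
  by (simp add: code_word_def)

lemma nth_code_word:
  "i < n \<Longrightarrow> code_word a g n T ! i = (if i \<in> T then Suc ((a i + \<Sum>T) mod g) else 0)"
  by (simp add: code_word_def)

lemma supp_code_word: "T \<subseteq> {..<n} \<Longrightarrow> supp (code_word a g n T) = T"
  unfolding supp_def by (auto simp: nth_code_word split: if_splits)

lemma code_word_in_Hq:
  assumes "T \<in> triples n" "0 < g"
  shows "code_word a g n T \<in> Hq (g + 1) n 3"
  using assms supp_code_word[of T n a g]
  unfolding Hq_def triples_def by (auto simp: code_word_def weight_eq_card_supp)

lemma row_code_subset_Hq: "0 < g \<Longrightarrow> row_code a g n \<subseteq> Hq (g + 1) n 3"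
  unfolding row_code_def using code_word_in_Hq by blast

lemma code_word_eq_imp_mod_eq:
  assumes "code_word a g n T = code_word b g n T" "i \<in> T" "i < n"
  shows "a i mod g = b i mod g"
proof -
  have "(a i + \<Sum>T) mod g = (b i + \<Sum>T) mod g"
    using arg_cong[OF assms(1), of "\<lambda>x. x ! i"] assms(2,3) by (simp add: nth_code_word)
  then show ?thesis
    using cong_add_rcancel_nat[of "a i" "\<Sum>T" "b i" g] by (simp add: cong_def)
qed

lemma hamming_dist_code_word:
  assumes T: "T \<in> triples n" and T': "T' \<in> triples n" and "T \<noteq> T'" and "n \<le> g"
  shows "4 \<le> hamming_dist (code_word a g n T) (code_word a g n T')"
proof -
  define D where "D = {i. i < n \<and> code_word a g n T ! i \<noteq> code_word a g n T' ! i}"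
  have fin: "finite T" "finite T'" "finite D"
    using T T' unfolding triples_def D_def by (auto intro: finite_subset)
  have card3: "card T = 3" "card T' = 3"
    using T T' unfolding triples_def by auto
  have sym_diff: "(T \<union> T') - (T \<inter> T') \<subseteq> D"
    using T T' unfolding D_def triples_def by (auto simp: nth_code_word)
  have "card (T \<inter> T') \<noteq> 3"
    using card3 fin \<open>T \<noteq> T'\<close>
    by (metis Int_lower1 Int_lower2 card_subset_eq finite_Int)
  moreover have "card (T \<inter> T') \<le> 3"
    using card3 fin by (metis Int_lower1 card_mono)
  moreover have union: "card (T \<union> T') + card (T \<inter> T') = 6"
    using card_Un_Int[OF fin(1,2)] card3 by simp
  ultimately consider "card (T \<inter> T') \<le> 1" | "card (T \<inter> T') = 2"
    by linarith
  then have "4 \<le> card D"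
  proof cases
    case 1
    have "card (T \<union> T') - card (T \<inter> T') = card ((T \<union> T') - (T \<inter> T'))"
      using fin by (intro card_Diff_subset[symmetric]) auto
    also have "\<dots> \<le> card D"
      using sym_diff fin by (intro card_mono) auto
    finally show ?thesis using 1 union by arith
  next
    case 2
    then have "\<Sum>T mod g \<noteq> \<Sum>T' mod g"
      using sum_mod_neq_if_card_Int_eq_2 T T' \<open>n \<le> g\<close> by blast
    then have "(a i + \<Sum>T) mod g \<noteq> (a i + \<Sum>T') mod g" for i
      using cong_add_lcancel_nat[of "a i" "\<Sum>T" "\<Sum>T'" g] by (simp add: cong_def)
    then have "T \<inter> T' \<subseteq> D"
      using T T' unfolding D_def triples_def by (auto simp: nth_code_word)
    then have "card (T \<union> T') \<le> card D"
      using sym_diff fin by (intro card_mono) auto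
    then show ?thesis using 2 union by linarith
  qed
  then show ?thesis
    unfolding hamming_dist_def D_def by simp
qed

lemma card_row_code: "card (row_code a g n) = n choose 3"
proof -
  have "inj_on (code_word a g n) (triples n)"
    by (rule inj_onI) (metis supp_code_word triples_def mem_Collect_eq)
  then show ?thesis
    unfolding row_code_def by (simp add: card_image card_triples)
qed

lemma optimal_row_code:
  assumes "3 \<le> n" "0 < g" "n = 3 \<or> n \<le> g"
  shows "optimal_code (g + 1) n 4 3 (row_code a g n)"
proof (rule optimal_code_if_card_eq_choose)
  have "{0, 1, 2} \<in> triples n"
    using \<open>3 \<le> n\<close> unfolding triples_def by auto
  then have "row_code a g n \<noteq> {}"
    unfolding row_code_def by blast
  moreover have "4 \<le> hamming_dist (code_word a g n T) (code_word a g n T')"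
    if "T \<in> triples n" "T' \<in> triples n" "T \<noteq> T'" for T T'
    using that hamming_dist_code_word triples_distinct_imp_ge4 assms(3) by fastforce
  ultimately show "is_code (g + 1) n 4 3 (row_code a g n)"
    using row_code_subset_Hq[OF \<open>0 < g\<close>] unfolding is_code_def row_code_def by blast
qed (simp_all add: card_row_code)

lemma mod_add_neg_cancel:
  fixes v s t :: nat
  assumes "v < s"
  shows "((v + (s - 1) * t) mod s + t) mod s = v"
proof -
  have "((v + (s - 1) * t) mod s + t) mod s = (v + (s - 1) * t + t) mod s"
    by (simp add: mod_add_left_eq)
  also have "v + (s - 1) * t + t = v + s * t"
    using assms by (cases s) auto
  finally show ?thesis
    using assms by simp
qed

lemma m_param_ge: "n - 2 \<le> m_param n"
  unfolding m_param_def by auto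

locale oa3 =
  fixes A :: "nat \<Rightarrow> nat \<Rightarrow> nat" and k s :: nat
  assumes symbol_bound: "\<forall>r < s ^ 3. \<forall>c < k. A r c < s"
    and unique_row: "\<forall>cs vs. distinct cs \<and> length cs = 3 \<and> set cs \<subseteq> {..<k} \<and>
      length vs = 3 \<and> set vs \<subseteq> {..<s} \<longrightarrow>
      (\<exists>!r. r < s ^ 3 \<and> (\<forall>j < 3. A r (cs ! j) = vs ! j))"

lemma OA_imp_oa3: "OA 3 k s \<Longrightarrow> \<exists>A. oa3 A k s"
  unfolding OA_def oa3_def by blast

context oa3
begin

lemma unique_row_on_triple:
  assumes "T \<in> triples k" "\<forall>i\<in>T. f i < s"
  shows "\<exists>!r. r < s ^ 3 \<and> (\<forall>i\<in>T. A r i = f i)"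
proof -
  obtain a b c where T: "T = {a, b, c}" "a \<noteq> b" "b \<noteq> c" "a \<noteq> c"
    using assms(1) unfolding triples_def by (auto simp: card_3_iff)
  have all3: "(\<forall>j<3. P j) \<longleftrightarrow> P 0 \<and> P 1 \<and> P 2" for P :: "nat \<Rightarrow> bool"
    by (auto simp: numeral_3_eq_3 numeral_2_eq_2 less_Suc_eq)
  have "\<exists>!r. r < s ^ 3 \<and> (\<forall>j<3. A r ([a, b, c] ! j) = [f a, f b, f c] ! j)"
    using unique_row assms T unfolding triples_def by simp
  then show ?thesis
    unfolding all3 T by simp
qed

lemma row_exists:
  "T \<in> triples k \<Longrightarrow> \<forall>i\<in>T. f i < s \<Longrightarrow> \<exists>r < s ^ 3. \<forall>i\<in>T. A r i = f i"
  using unique_row_on_triple by blast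

lemma row_unique:
  assumes "T \<in> triples k" "r < s ^ 3" "r' < s ^ 3" "\<forall>i\<in>T. A r i = A r' i"
  shows "r = r'"
proof -
  have "\<forall>i\<in>T. A r i < s"
    using assms(1,2) symbol_bound unfolding triples_def by auto
  then show ?thesis
    using unique_row_on_triple[OF assms(1), of "A r"] assms(2-4) by auto
qed

lemma card_rows_fixing_two:
  assumes "3 \<le> k" "a < k" "b < k" "a \<noteq> b" "u < s" "v < s"
  shows "card {r. r < s ^ 3 \<and> A r a = u \<and> A r b = v} = s"
proof -
  have "\<exists>c < 3. c \<noteq> a \<and> c \<noteq> b"
    by presburger
  then obtain c where c: "c < k" "c \<noteq> a" "c \<noteq> b"
    using \<open>3 \<le> k\<close> less_le_trans by blast
  let ?R = "{r. r < s ^ 3 \<and> A r a = u \<and> A r b = v}"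
  have T: "{a, b, c} \<in> triples k"
    using assms c unfolding triples_def by auto
  have "bij_betw (\<lambda>r. A r c) ?R {..<s}"
  proof (rule bij_betw_imageI)
    show "inj_on (\<lambda>r. A r c) ?R"
      by (rule inj_onI) (use row_unique[OF T] in auto)
    show "(\<lambda>r. A r c) ` ?R = {..<s}"
    proof
      show "(\<lambda>r. A r c) ` ?R \<subseteq> {..<s}"
        using symbol_bound c by auto
      show "{..<s} \<subseteq> (\<lambda>r. A r c) ` ?R"
      proof
        fix w assume "w \<in> {..<s}"
        define f where "f i = (if i = a then u else if i = b then v else w)" for i
        have "\<forall>i\<in>{a, b, c}. f i < s"
          using \<open>w \<in> {..<s}\<close> assms unfolding f_def by auto
        then obtain r where "r < s ^ 3" "\<forall>i\<in>{a, b, c}. A r i = f i"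
          using row_exists[OF T] by blast
        then show "w \<in> (\<lambda>r. A r c) ` ?R"
          using c assms unfolding f_def by force
      qed
    qed
  qed
  then show ?thesis
    by (simp add: bij_betw_same_card)
qed

lemma card_rows_fixing_one:
  assumes "3 \<le> k" "a < k" "u < s"
  shows "card {r. r < s ^ 3 \<and> A r a = u} = s ^ 2"
proof -
  define b where "b = (if a = 0 then 1 else 0 :: nat)"
  have b: "b < k" "b \<noteq> a"
    using assms unfolding b_def by auto
  have "{r. r < s ^ 3 \<and> A r a = u} = (\<Union>v<s. {r. r < s ^ 3 \<and> A r a = u \<and> A r b = v})"
    using symbol_bound b by auto
  also have "card \<dots> = (\<Sum>v<s. card {r. r < s ^ 3 \<and> A r a = u \<and> A r b = v})"
    by (rule card_UN_disjoint) auto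
  also have "\<dots> = s ^ 2"
    using card_rows_fixing_two assms b by (simp add: power2_eq_square)
  finally show ?thesis .
qed

text \<open>Of the \<open>s\<^sup>2 - 1\<close> rows other than row 0 that agree with it in column 0, each further
  column singles out \<open>s - 1\<close> agreeing with row 0 there too, and no row is singled out twice.\<close>
theorem bush_bound:
  assumes "2 \<le> s"
  shows "k \<le> s + 2"
proof (cases "k \<le> 2")
  case False
  then have "3 \<le> k" by simp
  have "0 < s ^ 3" using assms by simp
  define R where "R = {r. r < s ^ 3 \<and> A r 0 = A 0 0} - {0}"
  define S where "S c = {r. r < s ^ 3 \<and> A r 0 = A 0 0 \<and> A r c = A 0 c} - {0}" for c
  have "card R = s ^ 2 - 1"
    using card_rows_fixing_one[OF \<open>3 \<le> k\<close>, of 0 "A 0 0"] symbol_bound \<open>0 < s ^ 3\<close> \<open>3 \<le> k\<close>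
    unfolding R_def by simp
  have card_S: "card (S c) = s - 1" if "c \<in> {1..<k}" for c
    using card_rows_fixing_two[OF \<open>3 \<le> k\<close>, of 0 c "A 0 0" "A 0 c"] symbol_bound
      \<open>0 < s ^ 3\<close> that unfolding S_def by simp
  have disjoint: "S c \<inter> S c' = {}" if "c \<in> {1..<k}" "c' \<in> {1..<k}" "c \<noteq> c'" for c c'
  proof -
    have "{0, c, c'} \<in> triples k"
      using that unfolding triples_def by auto
    then show ?thesis
      using row_unique[of "{0, c, c'}" _ 0] \<open>0 < s ^ 3\<close> unfolding S_def by auto
  qed
  have "(k - 1) * (s - 1) = (\<Sum>c\<in>{1..<k}. card (S c))"
    using card_S by simp
  also have "\<dots> = card (\<Union>c\<in>{1..<k}. S c)"
    using disjoint by (intro card_UN_disjoint[symmetric]) (auto simp: S_def)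
  also have "\<dots> \<le> card R"
    by (rule card_mono) (auto simp: R_def S_def)
  also have "\<dots> = (s + 1) * (s - 1)"
    using \<open>card R = s ^ 2 - 1\<close> by (simp add: power2_eq_square algebra_simps)
  finally have "(k - 1) * (s - 1) \<le> (s + 1) * (s - 1)" .
  moreover have "0 < s - 1"
    using assms by simp
  ultimately have "k - 1 \<le> s + 1"
    using mult_le_cancel2 by blast
  then show ?thesis by simp
qed simp

lemma Hq_subset_row_codes:
  assumes "n \<le> k" "0 < s" "x \<in> Hq (s + 1) n 3"
  shows "\<exists>r < s ^ 3. x \<in> row_code (A r) s n"
proof -
  have x: "length x = n" "set x \<subseteq> {..<s + 1}" "weight x = 3"
    using assms(3) unfolding Hq_def by auto
  define T where "T = supp x"
  have "T \<in> triples n"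
    using x supp_subset_indices unfolding T_def triples_def by (auto simp: weight_eq_card_supp)
  define f where "f i = (x ! i - 1 + (s - 1) * \<Sum>T) mod s" for i
  obtain r where r: "r < s ^ 3" "\<forall>i\<in>T. A r i = f i"
    using row_exists[of T f] \<open>T \<in> triples n\<close> triples_mono[OF \<open>n \<le> k\<close>] \<open>0 < s\<close>
    unfolding f_def by auto
  have "x = code_word (A r) s n T"
  proof (rule nth_equalityI)
    fix i assume "i < length x"
    show "x ! i = code_word (A r) s n T ! i"
    proof (cases "i \<in> T")
      case True
      then have "0 < x ! i" "x ! i - 1 < s"
        using x \<open>i < length x\<close> unfolding T_def supp_def by (auto dest!: nth_mem)
      moreover have "(A r i + \<Sum>T) mod s = x ! i - 1"
        using r True mod_add_neg_cancel[OF \<open>x ! i - 1 < s\<close>] unfolding f_def by simp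
      ultimately show ?thesis
        using True \<open>i < length x\<close> x by (simp add: nth_code_word)
    next
      case False
      then show ?thesis
        using \<open>i < length x\<close> x unfolding T_def supp_def by (simp add: nth_code_word)
    qed
  qed (simp add: x)
  then show ?thesis
    using r \<open>T \<in> triples n\<close> unfolding row_code_def by blast
qed

lemma row_codes_disjoint:
  assumes "n \<le> k" "r < s ^ 3" "r' < s ^ 3" "r \<noteq> r'"
  shows "row_code (A r) s n \<inter> row_code (A r') s n = {}"
proof (rule ccontr)
  assume "row_code (A r) s n \<inter> row_code (A r') s n \<noteq> {}"
  then obtain T T' where T: "T \<in> triples n" "T' \<in> triples n"
    and eq: "code_word (A r) s n T = code_word (A r') s n T'"
    unfolding row_code_def by blast
  have "supp (code_word (A r) s n T) = T" "supp (code_word (A r') s n T') = T'"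
    using T supp_code_word unfolding triples_def by simp_all
  with eq have "T = T'"
    by simp
  have "A r i = A r' i" if "i \<in> T" for i
  proof -
    have "i < n" "i < k" using that T \<open>n \<le> k\<close> unfolding triples_def by auto
    then have "A r i mod s = A r' i mod s"
      using code_word_eq_imp_mod_eq[of "A r" s n T "A r'" i] eq \<open>T = T'\<close> that by simp
    then show ?thesis
      using symbol_bound assms(2,3) \<open>i < k\<close> by simp
  qed
  moreover have "T \<in> triples k"
    using T(1) triples_mono[OF \<open>n \<le> k\<close>] by blast
  ultimately show False
    using row_unique[of T r r'] assms(2-4) by blast
qed

lemma TOC_row_codes:
  assumes "n \<le> k" "3 \<le> n" "0 < s" "n = 3 \<or> n \<le> s"
  shows "TOC (s + 1) n 4 3 ((\<lambda>r. row_code (A r) s n) ` {..<s ^ 3})"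
  unfolding TOC_def
proof (intro conjI)
  show "\<Union>((\<lambda>r. row_code (A r) s n) ` {..<s ^ 3}) = Hq (s + 1) n 3"
  proof
    show "\<Union>((\<lambda>r. row_code (A r) s n) ` {..<s ^ 3}) \<subseteq> Hq (s + 1) n 3"
      using row_code_subset_Hq[OF \<open>0 < s\<close>] by blast
    show "Hq (s + 1) n 3 \<subseteq> \<Union>((\<lambda>r. row_code (A r) s n) ` {..<s ^ 3})"
      using Hq_subset_row_codes[OF \<open>n \<le> k\<close> \<open>0 < s\<close>] by fastforce
  qed
  show "\<forall>C\<in>(\<lambda>r. row_code (A r) s n) ` {..<s ^ 3}. optimal_code (s + 1) n 4 3 C"
    using optimal_row_code assms(2-4) by blast
  show "\<forall>C\<in>(\<lambda>r. row_code (A r) s n) ` {..<s ^ 3}.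
      \<forall>D\<in>(\<lambda>r. row_code (A r) s n) ` {..<s ^ 3}. C \<noteq> D \<longrightarrow> C \<inter> D = {}"
    using row_codes_disjoint[OF \<open>n \<le> k\<close>] by blast
qed

end

theorem theorem4p8:
  fixes n g :: nat
  assumes "n \<ge> 3" and "g > 0" and "g \<ge> m_param n"
    and "OA 3 (n + 2) g"
  shows "\<exists>P. TOC (g + 1) n 4 3 P"
proof -
  obtain A where "oa3 A (n + 2) g"
    using OA_imp_oa3 assms(4) by blast
  then interpret oa3 A "n + 2" g .
  have "n = 3 \<or> n \<le> g"
  proof (cases "g = 1")
    case True
    then show ?thesis
      using m_param_ge[of n] assms(1,3) by simp
  next
    case False
    then show ?thesis
      using bush_bound assms(2) by simp
  qed
  moreover have "n \<le> n + 2"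
    by simp
  ultimately show ?thesis
    using TOC_row_codes assms(1,2) by blast
qed

end
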